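(* Given a finite set $P\subset\mathbb{R}^2$ partitioned into nonempty sets $P_1,\dots,P_k$, there is always a minimum-length two-level rectilinear Steiner tree for $P_1,\dots,P_k$ contained in the Hanan grid of $P$.
   Context: The Hanan grid of $P$ is the union of all horizontal and vertical lines passing through points of $P$. A rectilinear Steiner tree for a finite set $S\subset\mathbb{R}^2$ is a tree embedded in the plane with horizontal and vertical segments as edges whose vertex set contains $S$; its length is the sum of the $\ell_1$-lengths of its edges. A two-level rectilinear Steiner tree for $P_1,\dots,P_k$ is a tuple $(T_{top},T_1,\dots,T_k)$ where each $T_i$ is a rectilinear Steiner tree for $P_i$ and $T_{top}$ is a rectilinear Steiner tree intersecting (as a point set) every $T_i$; its length is $l(T_{top})+\sum_i l(T_i)$. *)

theory Defs
  imports "HOL-Analysis.Analysis"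
begin

type_synonym pt = "real \<times> real"

text \<open>A rectilinear Steiner tree is given by a finite vertex set V and a set E of
  edges (u,v) (each unordered edge stored once, in one orientation).\<close>

definition l1dist :: "pt \<Rightarrow> pt \<Rightarrow> real" where
  "l1dist u v = \<bar>fst u - fst v\<bar> + \<bar>snd u - snd v\<bar>"

definition tree_len :: "(pt \<times> pt) set \<Rightarrow> real" where
  "tree_len E = (\<Sum>(u,v)\<in>E. l1dist u v)"

definition tree_pts :: "pt set \<Rightarrow> (pt \<times> pt) set \<Rightarrow> pt set" where
  "tree_pts V E = V \<union> (\<Union>(u,v)\<in>E. closed_segment u v)"

definition is_rst :: "pt set \<Rightarrow> pt set \<Rightarrow> (pt \<times> pt) set \<Rightarrow> bool" where
  "is_rst S V E \<longleftrightarrow>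
     finite V \<and> V \<noteq> {} \<and> S \<subseteq> V \<and>
     (\<forall>(u,v)\<in>E. u \<in> V \<and> v \<in> V \<and> u \<noteq> v \<and> (fst u = fst v \<or> snd u = snd v)) \<and>
     (\<forall>(u,v)\<in>E. (v,u) \<notin> E) \<and>
     \<comment> \<open>tree: connected with |E| = |V| - 1\<close>
     card E + 1 = card V \<and>
     (\<forall>u\<in>V. \<forall>v\<in>V. (u,v) \<in> (E \<union> E\<inverse>)\<^sup>*) \<and>
     \<comment> \<open>embedded in the plane: no vertex in the interior of an edge, and
        distinct edges meet only in common endpoints\<close>
     (\<forall>(u,v)\<in>E. \<forall>w\<in>V. w \<in> closed_segment u v \<longrightarrow> w = u \<or> w = v) \<and>
     (\<forall>(u,v)\<in>E. \<forall>(u',v')\<in>E. (u,v) \<noteq> (u',v') \<longrightarrow>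
        closed_segment u v \<inter> closed_segment u' v' \<subseteq> {u,v} \<inter> {u',v'})"

definition two_level_rst ::
  "nat \<Rightarrow> (nat \<Rightarrow> pt set) \<Rightarrow> pt set \<Rightarrow> (pt \<times> pt) set \<Rightarrow> (nat \<Rightarrow> pt set \<times> (pt \<times> pt) set) \<Rightarrow> bool" where
  "two_level_rst k Ps Vt Et T \<longleftrightarrow>
     is_rst {} Vt Et \<and>
     (\<forall>i<k. is_rst (Ps i) (fst (T i)) (snd (T i)) \<and>
            tree_pts Vt Et \<inter> tree_pts (fst (T i)) (snd (T i)) \<noteq> {})"

definition two_level_len ::
  "nat \<Rightarrow> (pt \<times> pt) set \<Rightarrow> (nat \<Rightarrow> pt set \<times> (pt \<times> pt) set) \<Rightarrow> real" where
  "two_level_len k Et T = tree_len Et + (\<Sum>i<k. tree_len (snd (T i)))"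

definition hanan_grid :: "pt set \<Rightarrow> pt set" where
  "hanan_grid P = {p. \<exists>q\<in>P. fst p = fst q \<or> snd p = snd q}"

end

theory Submission
  imports Defs
begin

text \<open>Any two-level tree can be moved onto the Hanan grid without becoming longer. Choose
  monotone maps \<open>g\<close> and \<open>h\<close> sending every abscissa (ordinate) that occurs in the trees to an
  abscissa (ordinate) of a point of \<open>P\<close>, fixing those of \<open>P\<close>, such that the total horizontal
  (vertical) length of all edges does not grow. They are built by moving the remaining
  coordinates one at a time onto a neighbouring coordinate: the total length is affine in the
  position of the moved coordinate between its two neighbours, so one of the two moves does not
  increase it. Replacing every edge \<open>uv\<close> of every tree by the grid path from \<open>(g, h) u\<close> to
  \<open>(g, h) v\<close> and extracting spanning trees gives a two-level tree on the Hanan grid; as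
  \<open>(g, h)\<close> preserves the boxes spanned by edges, the top tree still meets each lower tree. There
  are only finitely many two-level trees on the grid, and a shortest one among them is a shortest
  two-level tree overall.\<close>

section \<open>Undirected reachability and spanning trees\<close>

lemma rtrancl_map_prod_image: "(a, b) \<in> r\<^sup>* \<Longrightarrow> (f a, f b) \<in> (map_prod f f ` r)\<^sup>*"
proof (induction rule: rtrancl_induct)
  case (step y z)
  then have "(f y, f z) \<in> map_prod f f ` r" by force
  with step.IH show ?case by (rule rtrancl_into_rtrancl)
qed simp

lemma Un_converse_rtrancl_sym: "(a, b) \<in> (R \<union> R\<inverse>)\<^sup>* \<Longrightarrow> (b, a) \<in> (R \<union> R\<inverse>)\<^sup>*"
  using sym_rtrancl[OF sym_Un_converse] by (rule symD)

lemma Un_converse_rtrancl_join: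
  "(s, a) \<in> (R \<union> R\<inverse>)\<^sup>* \<Longrightarrow> (s, b) \<in> (R \<union> R\<inverse>)\<^sup>* \<Longrightarrow> (a, b) \<in> (R \<union> R\<inverse>)\<^sup>*"
  by (meson Un_converse_rtrancl_sym rtrancl_trans)

lemma Un_converse_rtrancl_mono: "(a, b) \<in> (R \<union> R\<inverse>)\<^sup>* \<Longrightarrow> R \<subseteq> S \<Longrightarrow> (a, b) \<in> (S \<union> S\<inverse>)\<^sup>*"
  using rtrancl_mono[of "R \<union> R\<inverse>" "S \<union> S\<inverse>"] by blast

lemma rtrancl_leaves_set:
  assumes "(a, b) \<in> R\<^sup>*" "a \<in> A" "b \<notin> A"
  shows "\<exists>c d. (c, d) \<in> R \<and> c \<in> A \<and> d \<notin> A"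
  using assms by (induction rule: rtrancl_induct) blast+

definition is_tree_on :: "'a set \<Rightarrow> ('a \<times> 'a) set \<Rightarrow> bool" where
  "is_tree_on W E \<longleftrightarrow> finite E \<and> (\<forall>(u, v)\<in>E. u \<in> W \<and> v \<in> W) \<and> card E + 1 = card W \<and>
     (\<forall>u\<in>W. \<forall>v\<in>W. (u, v) \<in> (E \<union> E\<inverse>)\<^sup>*)"

lemma is_tree_on_insert:
  assumes tree: "is_tree_on W E" and "finite W" "c \<in> W" "d \<notin> W" "e = (c, d) \<or> e = (d, c)"
  shows "is_tree_on (insert d W) (insert e E)"
proof -
  let ?E = "insert e E"
  have "e \<notin> E" using tree assms(4,5) by (auto simp: is_tree_on_def)
  then have card: "card ?E + 1 = card (insert d W)"
    using tree assms(2,4) by (simp add: is_tree_on_def)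
  have from_c: "(c, u) \<in> (?E \<union> ?E\<inverse>)\<^sup>*" if "u \<in> insert d W" for u
  proof (cases "u = d")
    case True
    then show ?thesis using assms(5) by auto
  next
    case False
    then have "(c, u) \<in> (E \<union> E\<inverse>)\<^sup>*" using that tree assms(3) by (auto simp: is_tree_on_def)
    then show ?thesis by (rule Un_converse_rtrancl_mono) auto
  qed
  have "\<forall>u\<in>insert d W. \<forall>v\<in>insert d W. (u, v) \<in> (?E \<union> ?E\<inverse>)\<^sup>*"
    using Un_converse_rtrancl_join[OF from_c from_c] by blast
  moreover have "\<forall>(u, v)\<in>?E. u \<in> insert d W \<and> v \<in> insert d W"
    using tree assms(3,5) by (auto simp: is_tree_on_def)
  ultimately show ?thesis using tree card by (simp add: is_tree_on_def)
qed

lemma exists_spanning_tree: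
  assumes "finite W" "W \<noteq> {}" and ends: "\<forall>(u, v)\<in>H. u \<in> W \<and> v \<in> W"
    and conn: "\<forall>u\<in>W. \<forall>v\<in>W. (u, v) \<in> (H \<union> H\<inverse>)\<^sup>*"
  shows "\<exists>E\<subseteq>H. is_tree_on W E"
proof -
  have "\<exists>W' E. W' \<subseteq> W \<and> E \<subseteq> H \<and> card W' = Suc n \<and> is_tree_on W' E" if "n < card W" for n
    using that
  proof (induction n)
    case 0
    obtain w where "w \<in> W" using assms(2) by blast
    then show ?case by (intro exI[of _ "{w}"] exI[of _ "{}"]) (auto simp: is_tree_on_def)
  next
    case (Suc n)
    then obtain W' E where W': "W' \<subseteq> W" "E \<subseteq> H" "card W' = Suc n" "is_tree_on W' E" by auto
    have "finite W'" using W'(1) assms(1) finite_subset by blast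
    obtain w0 where w0: "w0 \<in> W'" using W'(3) by fastforce
    have "W' \<noteq> W" using W'(3) Suc.prems by auto
    then obtain w where w: "w \<in> W" "w \<notin> W'" using W'(1) by blast
    have "(w0, w) \<in> (H \<union> H\<inverse>)\<^sup>*" using conn w0 w W'(1) by blast
    then obtain c d where cd: "(c, d) \<in> H \<union> H\<inverse>" "c \<in> W'" "d \<notin> W'"
      using rtrancl_leaves_set[OF _ w0 w(2)] by blast
    define e where "e = (if (c, d) \<in> H then (c, d) else (d, c))"
    have e: "e \<in> H" "e = (c, d) \<or> e = (d, c)" using cd(1) by (auto simp: e_def)
    have "d \<in> W" using e ends by auto
    then show ?case
      using is_tree_on_insert[OF W'(4) \<open>finite W'\<close> cd(2,3) e(2)] W' e(1) cd(3) \<open>finite W'\<close>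
      by (intro exI[of _ "insert d W'"] exI[of _ "insert e E"]) auto
  qed
  from this[of "card W - 1"] obtain W' E where "W' \<subseteq> W" "E \<subseteq> H" "card W' = card W" "is_tree_on W' E"
    using assms(1,2) by (auto simp: card_gt_0_iff)
  then show ?thesis using card_subset_eq[OF assms(1)] by blast
qed

section \<open>Consecutive elements of a finite set of reals\<close>

definition consec :: "real set \<Rightarrow> (real \<times> real) set" where
  "consec Z = {(z, z'). z \<in> Z \<and> z' \<in> Z \<and> z < z' \<and> (\<forall>w\<in>Z. \<not> (z < w \<and> w < z'))}"

definition consec_within :: "real set \<Rightarrow> real \<Rightarrow> real \<Rightarrow> (real \<times> real) set" where
  "consec_within Z a b = {(z, z') \<in> consec Z. a \<le> z \<and> z' \<le> b}"

lemma consecD: "(z, z') \<in> consec Z \<Longrightarrow> z \<in> Z \<and> z' \<in> Z \<and> z < z'"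
  by (simp add: consec_def)

lemma consec_no_between:
  "(z, z') \<in> consec Z \<Longrightarrow> w \<in> Z \<Longrightarrow> z \<le> w \<Longrightarrow> w \<le> z' \<Longrightarrow> w = z \<or> w = z'"
  unfolding consec_def by force

lemma consec_overlap:
  assumes "(z1, z1') \<in> consec Z" "(z2, z2') \<in> consec Z"
    and "z1 \<le> s" "s \<le> z1'" "z2 \<le> s" "s \<le> z2'"
  shows "(z1, z1') = (z2, z2') \<or> (s = z1' \<and> s = z2) \<or> (s = z2' \<and> s = z1)"
proof -
  have "z1' \<le> z2" if "z1 < z2"
    using assms(1,2) that consec_no_between[OF assms(1), of z2] by (auto simp: consec_def)
  moreover have "z2' \<le> z1" if "z2 < z1"
    using assms(1,2) that consec_no_between[OF assms(2), of z1] by (auto simp: consec_def)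
  moreover have "z1' = z2'" if "z1 = z2"
    using that assms(1,2) consec_no_between[OF assms(1), of z2']
      consec_no_between[OF assms(2), of z1']
    by (auto simp: consec_def)
  ultimately show ?thesis using assms(3-6) by force
qed

lemma finite_consec_within: "finite Z \<Longrightarrow> finite (consec_within Z a b)"
  by (rule finite_subset[of _ "Z \<times> Z"]) (auto simp: consec_within_def consec_def)

lemma consec_within_mono: "b \<le> b' \<Longrightarrow> consec_within Z a b \<subseteq> consec_within Z a b'"
  by (auto simp: consec_within_def)

lemma consec_pred_exists:
  assumes "finite Z" "a \<in> Z" "w \<in> Z" "a < w"
  shows "\<exists>z. a \<le> z \<and> (z, w) \<in> consec Z"
proof -
  define M where "M = {z \<in> Z. a \<le> z \<and> z < w}"
  have "finite M" "a \<in> M" using assms by (auto simp: M_def)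
  then have "Max M \<in> M" "\<forall>z\<in>M. z \<le> Max M" by (auto intro: Max_in)
  then show ?thesis using assms(3) by (intro exI[of _ "Max M"]) (force simp: M_def consec_def)
qed

lemma consec_within_insert_last:
  assumes "(z, b) \<in> consec Z" "a \<le> z"
  shows "consec_within Z a b = insert (z, b) (consec_within Z a z)"
proof (intro equalityI subsetI)
  fix e assume e: "e \<in> consec_within Z a b"
  then obtain x x' where x: "e = (x, x')" "(x, x') \<in> consec Z" "a \<le> x" "x' \<le> b"
    by (auto simp: consec_within_def)
  show "e \<in> insert (z, b) (consec_within Z a z)"
  proof (cases "x' = b")
    case True
    then have "x = z"
      using consec_overlap[OF x(2) assms(1), of x'] consec_no_between[OF assms(1), of x]
        consecD[OF x(2)] consecD[OF assms(1)] by fastforce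
    then show ?thesis using x True by simp
  next
    case False
    then have "x' \<le> z"
      using consec_no_between[OF assms(1), of x'] consecD[OF x(2)] consecD[OF assms(1)] x(4)
      by (cases "x' \<le> z") auto
    then show ?thesis using x by (simp add: consec_within_def)
  qed
qed (use assms consecD[OF assms(1)] in \<open>auto simp: consec_within_def\<close>)

lemma consec_within_chain:
  assumes "finite Z" "a \<in> Z" "b \<in> Z" "a \<le> b"
  shows "(a, b) \<in> (consec_within Z a b)\<^sup>* \<and> (\<Sum>(z, z')\<in>consec_within Z a b. z' - z) = b - a"
  using assms(3,4)
proof (induction "card {w \<in> Z. w < b}" arbitrary: b rule: less_induct)
  case less
  show ?case
  proof (cases "a = b")
    case True
    then have "consec_within Z a b = {}" by (auto simp: consec_within_def consec_def)
    then show ?thesis using True by simp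
  next
    case False
    then obtain z where z: "a \<le> z" "(z, b) \<in> consec Z"
      using consec_pred_exists[OF assms(1,2) less.prems(1)] less.prems(2) by fastforce
    have zZ: "z \<in> Z" "z < b" using consecD[OF z(2)] by auto
    have "card {w \<in> Z. w < z} < card {w \<in> Z. w < b}"
      by (rule psubset_card_mono) (use assms(1) zZ in auto)
    then have IH: "(a, z) \<in> (consec_within Z a z)\<^sup>*"
        "(\<Sum>(x, x')\<in>consec_within Z a z. x' - x) = z - a"
      using less.hyps zZ z(1) by blast+
    have split: "consec_within Z a b = insert (z, b) (consec_within Z a z)"
      by (rule consec_within_insert_last[OF z(2,1)])
    have notin: "(z, b) \<notin> consec_within Z a z" using zZ by (auto simp: consec_within_def)
    have "(a, z) \<in> (consec_within Z a b)\<^sup>*"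
      using IH(1) rtrancl_mono[of "consec_within Z a z" "consec_within Z a b"] split by blast
    then have "(a, b) \<in> (consec_within Z a b)\<^sup>*" using split by (simp add: rtrancl_into_rtrancl)
    moreover have "(\<Sum>(x, x')\<in>consec_within Z a b. x' - x) = b - a"
      using IH(2) notin finite_consec_within[OF assms(1)] split by simp
    ultimately show ?thesis ..
  qed
qed

lemma consec_within_reach:
  assumes "finite Z" "a \<in> Z" "w \<in> Z" "a \<le> w" "w \<le> b"
  shows "(a, w) \<in> (consec_within Z a b)\<^sup>*"
  using consec_within_chain[OF assms(1-4)] rtrancl_mono[OF consec_within_mono[OF assms(5)]] by blast

section \<open>The grid graph\<close>

definition grid_edges :: "real set \<Rightarrow> real set \<Rightarrow> (pt \<times> pt) set" where
  "grid_edges X Y = {((x, y), (x', y)) | x x' y. (x, x') \<in> consec X \<and> y \<in> Y}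
                  \<union> {((x, y), (x, y')) | x y y'. x \<in> X \<and> (y, y') \<in> consec Y}"

definition in_box :: "pt \<Rightarrow> pt \<Rightarrow> pt \<Rightarrow> bool" where
  "in_box w u v \<longleftrightarrow> min (fst u) (fst v) \<le> fst w \<and> fst w \<le> max (fst u) (fst v) \<and>
                    min (snd u) (snd v) \<le> snd w \<and> snd w \<le> max (snd u) (snd v)"

lemma grid_edgesE:
  assumes "(u, v) \<in> grid_edges X Y"
  obtains (horizontal) x x' y where "(x, x') \<in> consec X" "y \<in> Y" "u = (x, y)" "v = (x', y)"
        | (vertical) x y y' where "x \<in> X" "(y, y') \<in> consec Y" "u = (x, y)" "v = (x, y')"
  using assms unfolding grid_edges_def by blast

lemma grid_edge_lt:
  assumes "(u, v) \<in> grid_edges X Y"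
  shows "fst u < fst v \<and> snd u = snd v \<or> fst u = fst v \<and> snd u < snd v"
  using assms by (cases rule: grid_edgesE) (auto dest: consecD)

lemma grid_edge_props:
  assumes "(u, v) \<in> grid_edges X Y"
  shows "u \<noteq> v" "fst u = fst v \<or> snd u = snd v" "(v, u) \<notin> grid_edges X Y"
    "u \<in> X \<times> Y" "v \<in> X \<times> Y"
proof -
  show "u \<noteq> v" "fst u = fst v \<or> snd u = snd v" using grid_edge_lt[OF assms] by auto
  show "(v, u) \<notin> grid_edges X Y" using grid_edge_lt[OF assms] grid_edge_lt[of v u] by force
  show "u \<in> X \<times> Y" "v \<in> X \<times> Y" using assms by (cases rule: grid_edgesE; auto dest: consecD)+
qed

lemma finite_grid_edges: "finite X \<Longrightarrow> finite Y \<Longrightarrow> finite (grid_edges X Y)"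
  by (rule finite_subset[of _ "(X \<times> Y) \<times> (X \<times> Y)"]) (auto dest: grid_edge_props(4,5))

lemma closed_segment_in_box:
  assumes "w \<in> closed_segment u v"
  shows "in_box w u v"
proof -
  have "fst w \<in> closed_segment (fst u) (fst v)" "snd w \<in> closed_segment (snd u) (snd v)"
    using assms closed_segment_linear_image[of fst u v] closed_segment_linear_image[of snd u v]
    by (auto simp: bounded_linear_fst bounded_linear_snd bounded_linear.linear)
  then show ?thesis by (auto simp: in_box_def closed_segment_eq_real_ivl split: if_splits)
qed

lemma grid_edge_box_vertex:
  assumes "(u, v) \<in> grid_edges X Y" "w \<in> X \<times> Y" "in_box w u v"
  shows "w = u \<or> w = v"
  using assms(1)
proof (cases rule: grid_edgesE)
  case (horizontal x x' y)
  then have "fst w = x \<or> fst w = x'" "snd w = y"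
    using assms(2,3) consec_no_between[OF horizontal(1), of "fst w"] consecD[OF horizontal(1)]
    by (auto simp: in_box_def)
  then show ?thesis using horizontal by (cases w) auto
next
  case (vertical x y y')
  then have "snd w = y \<or> snd w = y'" "fst w = x"
    using assms(2,3) consec_no_between[OF vertical(2), of "snd w"] consecD[OF vertical(2)]
    by (auto simp: in_box_def)
  then show ?thesis using vertical by (cases w) auto
qed

lemma grid_edges_box_meet:
  assumes e: "(u, v) \<in> grid_edges X Y" and e': "(u', v') \<in> grid_edges X Y"
    and ne: "(u, v) \<noteq> (u', v')" and w: "in_box w u v" "in_box w u' v'"
  shows "w \<in> {u, v} \<inter> {u', v'}"
proof (cases "w \<in> X \<times> Y")
  case True
  then show ?thesis using grid_edge_box_vertex[OF e True] grid_edge_box_vertex[OF e' True] w by auto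
next
  case False
  from e show ?thesis
  proof (cases rule: grid_edgesE)
    case h1: (horizontal x1 x1' y1)
    from e' show ?thesis
    proof (cases rule: grid_edgesE)
      case (horizontal x2 x2' y2)
      with h1 False ne w show ?thesis
        using consec_overlap[of x1 x1' X x2 x2' "fst w"] consecD[of x1 x1' X] consecD[of x2 x2' X]
        by (auto simp: in_box_def)
    next
      case (vertical x2 y2 y2')
      with h1 False w show ?thesis by (auto simp: in_box_def mem_Times_iff)
    qed
  next
    case v1: (vertical x1 y1 y1')
    from e' show ?thesis
    proof (cases rule: grid_edgesE)
      case (vertical x2 y2 y2')
      with v1 False ne w show ?thesis
        using consec_overlap[of y1 y1' Y y2 y2' "snd w"] consecD[of y1 y1' Y] consecD[of y2 y2' Y]
        by (auto simp: in_box_def)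
    next
      case (horizontal x2 x2' y2)
      with v1 False w show ?thesis by (auto simp: in_box_def mem_Times_iff)
    qed
  qed
qed

lemma is_rst_edge_vertices: "is_rst S V E \<Longrightarrow> (u, v) \<in> E \<Longrightarrow> u \<in> V \<and> v \<in> V"
  unfolding is_rst_def by blast

lemma is_rst_edge_aligned: "is_rst S V E \<Longrightarrow> (u, v) \<in> E \<Longrightarrow> fst u = fst v \<or> snd u = snd v"
  unfolding is_rst_def by blast

lemma finite_is_rst_edges: "is_rst S V E \<Longrightarrow> finite E"
  by (rule finite_subset[of _ "V \<times> V"]) (auto dest: is_rst_edge_vertices simp: is_rst_def)

lemma is_rst_grid_tree:
  assumes "W \<subseteq> X \<times> Y" "S \<subseteq> W" and E: "E \<subseteq> grid_edges X Y" and tree: "is_tree_on W E"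
  shows "is_rst S W E"
  unfolding is_rst_def
proof (intro conjI)
  have "card W > 0" using tree by (simp add: is_tree_on_def)
  then show "finite W" "W \<noteq> {}" by (simp_all add: card_gt_0_iff)
  have ends: "\<forall>(u, v)\<in>E. u \<in> W \<and> v \<in> W" using tree by (simp add: is_tree_on_def)
  then show "\<forall>(u, v)\<in>E. u \<in> W \<and> v \<in> W \<and> u \<noteq> v \<and> (fst u = fst v \<or> snd u = snd v)"
    "\<forall>(u, v)\<in>E. (v, u) \<notin> E"
    using E grid_edge_props(1-3) by blast+
  show "\<forall>(u, v)\<in>E. \<forall>w\<in>W. w \<in> closed_segment u v \<longrightarrow> w = u \<or> w = v"
    using E assms(1) grid_edge_box_vertex closed_segment_in_box by blast
  have "w \<in> {u, v} \<inter> {u', v'}"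
    if "(u, v) \<in> E" "(u', v') \<in> E" "(u, v) \<noteq> (u', v')"
      "w \<in> closed_segment u v" "w \<in> closed_segment u' v'" for u v u' v' w
    using grid_edges_box_meet[of u v X Y u' v' w] that E closed_segment_in_box by blast
  then show "\<forall>(u, v)\<in>E. \<forall>(u', v')\<in>E. (u, v) \<noteq> (u', v') \<longrightarrow>
      closed_segment u v \<inter> closed_segment u' v' \<subseteq> {u, v} \<inter> {u', v'}"
    by blast
qed (use assms in \<open>simp_all add: is_tree_on_def\<close>)

lemma grid_tree_pts_subset_hanan:
  assumes "V \<subseteq> fst ` P \<times> snd ` P" "E \<subseteq> grid_edges (fst ` P) (snd ` P)"
  shows "tree_pts V E \<subseteq> hanan_grid P"
proof
  fix p assume "p \<in> tree_pts V E"
  then consider (vertex) "p \<in> V" | (edge) u v where "(u, v) \<in> E" "in_box p u v"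
    unfolding tree_pts_def using closed_segment_in_box by blast
  then have "fst p \<in> fst ` P \<or> snd p \<in> snd ` P"
  proof cases
    case edge
    from \<open>(u, v) \<in> E\<close> assms(2) have "(u, v) \<in> grid_edges (fst ` P) (snd ` P)" by blast
    then show ?thesis
    proof (cases rule: grid_edgesE)
      case (horizontal x x' y)
      then have "snd p = y" using \<open>in_box p u v\<close> by (simp add: in_box_def)
      then show ?thesis using horizontal(2) by blast
    next
      case (vertical x y y')
      then have "fst p = x" using \<open>in_box p u v\<close> by (simp add: in_box_def)
      then show ?thesis using vertical(1) by blast
    qed
  next
    case vertex
    then have "p \<in> fst ` P \<times> snd ` P" using assms(1) by blast
    then show ?thesis by (simp add: mem_Times_iff)
  qed
  then show "p \<in> hanan_grid P" by (force simp: hanan_grid_def)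
qed

section \<open>Grid paths\<close>

definition line_edges :: "(real \<Rightarrow> pt) \<Rightarrow> real set \<Rightarrow> real \<Rightarrow> real \<Rightarrow> (pt \<times> pt) set" where
  "line_edges f Z a b = map_prod f f ` consec_within Z a b"

lemma line_edges_reach:
  assumes "finite Z" "a \<in> Z" "w \<in> Z" "a \<le> w" "w \<le> b"
  shows "(f a, f w) \<in> (line_edges f Z a b)\<^sup>*"
  using rtrancl_map_prod_image[OF consec_within_reach[OF assms]] by (simp add: line_edges_def)

lemma line_edges_reach_edge:
  assumes "finite Z" "a \<in> Z" "e \<in> line_edges f Z a b"
  shows "(f a, fst e) \<in> (line_edges f Z a b)\<^sup>*" "(f a, snd e) \<in> (line_edges f Z a b)\<^sup>*"
proof -
  obtain z z' where "e = (f z, f z')" "(z, z') \<in> consec Z" "a \<le> z" "z' \<le> b"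
    using assms(3) by (auto simp: line_edges_def consec_within_def)
  then show "(f a, fst e) \<in> (line_edges f Z a b)\<^sup>*" "(f a, snd e) \<in> (line_edges f Z a b)\<^sup>*"
    using line_edges_reach[OF assms(1,2)] consecD by fastforce+
qed

lemma line_edges_len:
  assumes "finite Z" "a \<in> Z" "b \<in> Z" "a \<le> b"
    and iso: "\<And>z z'. l1dist (f z) (f z') = \<bar>z' - z\<bar>"
  shows "(\<Sum>e\<in>line_edges f Z a b. l1dist (fst e) (snd e)) = b - a"
proof -
  have "inj f"
  proof (rule injI)
    fix z z' assume "f z = f z'"
    then show "z = z'" using iso[of z z'] by (simp add: l1dist_def)
  qed
  then have "inj_on (map_prod f f) (consec_within Z a b)"
    using map_prod_inj_on[of f UNIV f UNIV] by (auto intro: inj_on_subset)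
  then have "(\<Sum>e\<in>line_edges f Z a b. l1dist (fst e) (snd e)) =
      (\<Sum>(z, z')\<in>consec_within Z a b. l1dist (f z) (f z'))"
    unfolding line_edges_def by (simp add: sum.reindex case_prod_unfold)
  also have "\<dots> = (\<Sum>(z, z')\<in>consec_within Z a b. z' - z)"
    by (rule sum.cong) (auto simp: iso consec_within_def dest: consecD)
  finally show ?thesis using consec_within_chain[OF assms(1-4)] by simp
qed

lemma line_edges_covers:
  assumes "finite Z" "a \<in> Z" "w \<in> Z" "a < w" "w \<le> b"
  shows "\<exists>e\<in>line_edges f Z a b. snd e = f w"
proof -
  obtain z where "a \<le> z" "(z, w) \<in> consec Z" using consec_pred_exists[OF assms(1-4)] by blast
  then have "(z, w) \<in> consec_within Z a b" using assms(5) by (simp add: consec_within_def)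
  then show ?thesis unfolding line_edges_def by force
qed

definition grid_path :: "real set \<Rightarrow> real set \<Rightarrow> pt \<Rightarrow> pt \<Rightarrow> (pt \<times> pt) set" where
  "grid_path X Y p q =
     (if snd p = snd q
      then line_edges (\<lambda>x. (x, snd p)) X (min (fst p) (fst q)) (max (fst p) (fst q))
      else if fst p = fst q
      then line_edges (\<lambda>y. (fst p, y)) Y (min (snd p) (snd q)) (max (snd p) (snd q))
      else {})"

text \<open>Both branches of \<open>grid_path\<close> are paths along a grid line, parametrised
  isometrically by \<open>f\<close>; the lemmas below are proved once for this common form.\<close>

lemma grid_path_cases:
  assumes "finite X" "finite Y" "p \<in> X \<times> Y" "q \<in> X \<times> Y" "fst p = fst q \<or> snd p = snd q"
  obtains f Z a b where "grid_path X Y p q = line_edges f Z a b"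
    "finite Z" "a \<in> Z" "b \<in> Z" "a \<le> b" "{p, q} = {f a, f b}"
    "\<And>z z'. l1dist (f z) (f z') = \<bar>z' - z\<bar>"
    "map_prod f f ` consec Z \<subseteq> grid_edges X Y"
    "\<And>w. w \<in> X \<times> Y \<Longrightarrow> in_box w p q \<Longrightarrow> \<exists>z\<in>Z. a \<le> z \<and> z \<le> b \<and> w = f z"
proof (cases "snd p = snd q")
  case True
  show ?thesis
  proof (rule that[of "\<lambda>x. (x, snd p)" X "min (fst p) (fst q)" "max (fst p) (fst q)"])
    show "grid_path X Y p q =
        line_edges (\<lambda>x. (x, snd p)) X (min (fst p) (fst q)) (max (fst p) (fst q))"
      using True by (simp add: grid_path_def)
    show "{p, q} = {(min (fst p) (fst q), snd p), (max (fst p) (fst q), snd p)}"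
      using True by (cases p, cases q) (auto simp: min_def max_def)
    show "map_prod (\<lambda>x. (x, snd p)) (\<lambda>x. (x, snd p)) ` consec X \<subseteq> grid_edges X Y"
      using assms(3) by (auto simp: grid_edges_def mem_Times_iff)
    show "\<exists>z\<in>X. min (fst p) (fst q) \<le> z \<and> z \<le> max (fst p) (fst q) \<and> w = (z, snd p)"
      if "w \<in> X \<times> Y" "in_box w p q" for w
      using that True by (cases w) (auto simp: in_box_def)
  qed (use assms True in \<open>auto simp: l1dist_def min_def max_def mem_Times_iff\<close>)
next
  case False
  then have fst_eq: "fst p = fst q" using assms(5) by simp
  show ?thesis
  proof (rule that[of "\<lambda>y. (fst p, y)" Y "min (snd p) (snd q)" "max (snd p) (snd q)"])
    show "grid_path X Y p q =
        line_edges (\<lambda>y. (fst p, y)) Y (min (snd p) (snd q)) (max (snd p) (snd q))"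
      using False fst_eq by (simp add: grid_path_def)
    show "{p, q} = {(fst p, min (snd p) (snd q)), (fst p, max (snd p) (snd q))}"
      using fst_eq by (cases p, cases q) (auto simp: min_def max_def)
    show "map_prod (\<lambda>y. (fst p, y)) (\<lambda>y. (fst p, y)) ` consec Y \<subseteq> grid_edges X Y"
      using assms(3) by (auto simp: grid_edges_def mem_Times_iff)
    show "\<exists>z\<in>Y. min (snd p) (snd q) \<le> z \<and> z \<le> max (snd p) (snd q) \<and> w = (fst p, z)"
      if "w \<in> X \<times> Y" "in_box w p q" for w
      using that fst_eq by (cases w) (auto simp: in_box_def)
  qed (use assms fst_eq in \<open>auto simp: l1dist_def min_def max_def mem_Times_iff\<close>)
qed

lemma finite_grid_path: "finite X \<Longrightarrow> finite Y \<Longrightarrow> finite (grid_path X Y p q)"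
  by (simp add: grid_path_def line_edges_def finite_consec_within)

context
  fixes X Y :: "real set" and p q :: pt
  assumes grid: "finite X" "finite Y" "p \<in> X \<times> Y" "q \<in> X \<times> Y"
    and aligned: "fst p = fst q \<or> snd p = snd q"
begin

lemma grid_path_subset: "grid_path X Y p q \<subseteq> grid_edges X Y"
proof -
  obtain f Z a b where "grid_path X Y p q = line_edges f Z a b"
    "map_prod f f ` consec Z \<subseteq> grid_edges X Y"
    by (rule grid_path_cases[OF grid aligned]) blast
  then show ?thesis by (auto simp: line_edges_def consec_within_def)
qed

lemma grid_path_connects:
  defines "R \<equiv> grid_path X Y p q"
  shows "(p, q) \<in> (R \<union> R\<inverse>)\<^sup>*"
    and "e \<in> R \<Longrightarrow> (p, fst e) \<in> (R \<union> R\<inverse>)\<^sup>* \<and> (p, snd e) \<in> (R \<union> R\<inverse>)\<^sup>*"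
proof -
  obtain f Z a b where R: "R = line_edges f Z a b" and Z: "finite Z" "a \<in> Z" "b \<in> Z" "a \<le> b"
    and pq: "{p, q} = {f a, f b}"
    unfolding R_def by (rule grid_path_cases[OF grid aligned]) blast
  have start: "(f a, x) \<in> (R \<union> R\<inverse>)\<^sup>*" if "x \<in> {p, q}" for x
    using that pq line_edges_reach[OF Z(1,2), of a b f] line_edges_reach[OF Z(1,2,3,4), of b f] R
    by (auto intro: in_rtrancl_UnI)
  have from_p: "(p, x) \<in> (R \<union> R\<inverse>)\<^sup>*" if "(f a, x) \<in> (R \<union> R\<inverse>)\<^sup>*" for x
    using Un_converse_rtrancl_join[OF start[of p] that] by simp
  show "(p, q) \<in> (R \<union> R\<inverse>)\<^sup>*" using from_p[OF start[of q]] by simp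
  show "(p, fst e) \<in> (R \<union> R\<inverse>)\<^sup>* \<and> (p, snd e) \<in> (R \<union> R\<inverse>)\<^sup>*" if "e \<in> R"
    using from_p[OF in_rtrancl_UnI] line_edges_reach_edge[OF Z(1,2), of e f b] that R by blast
qed

lemma grid_path_len: "(\<Sum>e\<in>grid_path X Y p q. l1dist (fst e) (snd e)) = l1dist p q"
proof -
  obtain f Z a b where R: "grid_path X Y p q = line_edges f Z a b"
    and Z: "finite Z" "a \<in> Z" "b \<in> Z" "a \<le> b" and pq: "{p, q} = {f a, f b}"
    and iso: "\<And>z z'. l1dist (f z) (f z') = \<bar>z' - z\<bar>"
    by (rule grid_path_cases[OF grid aligned]) blast
  have "l1dist p q = b - a" using pq iso[of a b] iso[of b a] Z(4) by (auto simp: doubleton_eq_iff)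
  then show ?thesis using line_edges_len[OF Z, of f] iso R by simp
qed

lemma grid_path_covers_box:
  assumes "w \<in> X \<times> Y" "in_box w p q"
  shows "w = p \<or> w = q \<or> (\<exists>e\<in>grid_path X Y p q. w = snd e)"
proof -
  obtain f Z a b where R: "grid_path X Y p q = line_edges f Z a b"
    and Z: "finite Z" "a \<in> Z" "b \<in> Z" "a \<le> b" and pq: "{p, q} = {f a, f b}"
    and box: "\<And>w. w \<in> X \<times> Y \<Longrightarrow> in_box w p q \<Longrightarrow> \<exists>z\<in>Z. a \<le> z \<and> z \<le> b \<and> w = f z"
    by (rule grid_path_cases[OF grid aligned]) blast
  obtain z where z: "z \<in> Z" "a \<le> z" "z \<le> b" "w = f z" using box[OF assms] by blast
  show ?thesis
  proof (cases "z = a")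
    case True
    then show ?thesis using pq z(4) by (auto simp: doubleton_eq_iff)
  next
    case False
    then show ?thesis using line_edges_covers[OF Z(1,2) z(1) _ z(3), of f] z R by force
  qed
qed

end

lemma grid_connected:
  assumes "finite X" "finite Y"
  shows "\<forall>u\<in>X \<times> Y. \<forall>v\<in>X \<times> Y. (u, v) \<in> (grid_edges X Y \<union> (grid_edges X Y)\<inverse>)\<^sup>*"
proof (intro ballI)
  fix u v assume uv: "u \<in> X \<times> Y" "v \<in> X \<times> Y"
  have link: "(p, q) \<in> (grid_edges X Y \<union> (grid_edges X Y)\<inverse>)\<^sup>*"
    if "p \<in> X \<times> Y" "q \<in> X \<times> Y" "fst p = fst q \<or> snd p = snd q" for p q
    using Un_converse_rtrancl_mono[OF grid_path_connects(1) grid_path_subset] assms that by blast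
  have corner: "(fst v, snd u) \<in> X \<times> Y" using uv by (simp add: mem_Times_iff)
  show "(u, v) \<in> (grid_edges X Y \<union> (grid_edges X Y)\<inverse>)\<^sup>*"
    using link[OF uv(1) corner] link[OF corner uv(2)] by (simp add: rtrancl_trans)
qed

section \<open>Length-nonincreasing monotone retractions\<close>

definition relocate :: "real \<Rightarrow> real \<Rightarrow> real \<Rightarrow> real" where
  "relocate c t z = (if z = c then t else z)"

lemma relocate_self [simp]: "relocate c c z = z"
  by (simp add: relocate_def)

lemma abs_diff_relocate_affine:
  fixes l c r x y :: real
  assumes "l < c" "c < r" "x = c \<or> x \<le> l \<or> r \<le> x" "y = c \<or> y \<le> l \<or> r \<le> y"
  shows "\<bar>y - x\<bar> * (r - l) =
    (r - c) * \<bar>relocate c l y - relocate c l x\<bar> + (c - l) * \<bar>relocate c r y - relocate c r x\<bar>"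
  using assms by (auto simp: relocate_def abs_if algebra_simps)

context
  fixes c :: real and I :: "'i set" and a b :: "'i \<Rightarrow> real"
begin

definition relocated_len :: "real \<Rightarrow> real" where
  "relocated_len t = (\<Sum>i\<in>I. \<bar>relocate c t (b i) - relocate c t (a i)\<bar>)"

lemma relocated_len_right_le:
  assumes "c < r" "\<forall>i\<in>I. (a i = c \<or> r \<le> a i) \<and> (b i = c \<or> r \<le> b i)"
  shows "relocated_len r \<le> relocated_len c"
  unfolding relocated_len_def
  by (rule sum_mono) (use assms in \<open>auto simp: relocate_def abs_if\<close>)

lemma relocated_len_left_le:
  assumes "l < c" "\<forall>i\<in>I. (a i = c \<or> a i \<le> l) \<and> (b i = c \<or> b i \<le> l)"
  shows "relocated_len l \<le> relocated_len c"
  unfolding relocated_len_def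
  by (rule sum_mono) (use assms in \<open>auto simp: relocate_def abs_if\<close>)

text \<open>No value of \<open>a\<close> or \<open>b\<close> lies strictly between \<open>l\<close> and \<open>r\<close> except \<open>c\<close>, so the relocated
  length is affine in the new position on \<open>[l, r]\<close> and one endpoint does at least as well as \<open>c\<close>.\<close>

lemma relocated_len_min_le:
  assumes "l < c" "c < r" "\<forall>i\<in>I. (a i = c \<or> a i \<le> l \<or> r \<le> a i) \<and> (b i = c \<or> b i \<le> l \<or> r \<le> b i)"
  shows "min (relocated_len l) (relocated_len r) \<le> relocated_len c"
proof -
  let ?F = relocated_len
  have "?F c * (r - l) = (r - c) * ?F l + (c - l) * ?F r"
    unfolding relocated_len_def sum_distrib_left sum_distrib_right sum.distrib[symmetric]
    by (rule sum.cong) (use assms abs_diff_relocate_affine in auto)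
  moreover have "(r - c) * min (?F l) (?F r) \<le> (r - c) * ?F l"
    "(c - l) * min (?F l) (?F r) \<le> (c - l) * ?F r"
    using assms(1,2) by (simp_all add: mult_left_mono)
  ultimately have "min (?F l) (?F r) * (r - l) \<le> ?F c * (r - l)" by (simp add: algebra_simps)
  then show ?thesis using assms(1,2) by simp
qed

end

lemma mono_on_relocate:
  assumes "\<forall>z\<in>C. (z < c \<longrightarrow> z \<le> c') \<and> (c < z \<longrightarrow> c' \<le> z)"
  shows "mono_on C (relocate c c')"
proof (rule mono_onI)
  fix x y assume "x \<in> C" "y \<in> C" "x \<le> y"
  then show "relocate c c' x \<le> relocate c c' y"
    using assms by (cases "x = c"; cases "y = c") (auto simp: relocate_def)
qed

lemma neighbours_cases:
  fixes C :: "real set"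
  assumes "finite C" "c \<in> C" "C - {c} \<noteq> {}"
  obtains (left) l where "l \<in> C" "l < c" "\<forall>z\<in>C. z = c \<or> z \<le> l"
    | (right) r where "r \<in> C" "c < r" "\<forall>z\<in>C. z = c \<or> r \<le> z"
    | (both) l r where "l \<in> C" "r \<in> C" "l < c" "c < r" "\<forall>z\<in>C. z = c \<or> z \<le> l \<or> r \<le> z"
proof -
  define Lo where "Lo = {z \<in> C. z < c}"
  define Hi where "Hi = {z \<in> C. c < z}"
  have fin: "finite Lo" "finite Hi" using assms(1) by (simp_all add: Lo_def Hi_def)
  have l: "Max Lo \<in> C" "Max Lo < c" "\<forall>z\<in>C. z < c \<longrightarrow> z \<le> Max Lo" if "Lo \<noteq> {}"
    using Max_in[OF fin(1) that] Max_ge[OF fin(1)] by (auto simp: Lo_def)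
  have r: "Min Hi \<in> C" "c < Min Hi" "\<forall>z\<in>C. c < z \<longrightarrow> Min Hi \<le> z" if "Hi \<noteq> {}"
    using Min_in[OF fin(2) that] Min_le[OF fin(2)] by (auto simp: Hi_def)
  have split: "z = c \<or> z \<in> Lo \<or> z \<in> Hi" if "z \<in> C" for z
    using that by (auto simp: Lo_def Hi_def)
  consider "Hi = {}" | "Lo = {}" | "Lo \<noteq> {}" "Hi \<noteq> {}" by blast
  then show ?thesis
  proof cases
    case 1
    then have "Lo \<noteq> {}" using assms(3) split by blast
    then show ?thesis using left l split 1 by (auto simp: Lo_def)
  next
    case 2
    then have "Hi \<noteq> {}" using assms(3) split by blast
    then show ?thesis using right r split 2 by (auto simp: Hi_def)
  next
    case 3
    show ?thesis
      by (rule both[of "Max Lo" "Min Hi"])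
        (use l[OF 3(1)] r[OF 3(2)] split in \<open>auto simp: Lo_def Hi_def\<close>)
  qed
qed

lemma exists_relocation_target:
  assumes C: "finite C" "c \<in> C" "C - {c} \<noteq> {}" and ab: "\<forall>i\<in>I. a i \<in> C \<and> b i \<in> C"
  shows "\<exists>c'\<in>C - {c}. (\<forall>z\<in>C. (z < c \<longrightarrow> z \<le> c') \<and> (c < z \<longrightarrow> c' \<le> z)) \<and>
    relocated_len c I a b c' \<le> relocated_len c I a b c"
  using C
proof (cases rule: neighbours_cases)
  case (left l)
  then have "relocated_len c I a b l \<le> relocated_len c I a b c"
    using ab by (intro relocated_len_left_le) auto
  with left show ?thesis by (intro bexI[of _ l]) force+
next
  case (right r)
  then have "relocated_len c I a b r \<le> relocated_len c I a b c"
    using ab by (intro relocated_len_right_le) auto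
  with right show ?thesis by (intro bexI[of _ r]) force+
next
  case (both l r)
  then have "min (relocated_len c I a b l) (relocated_len c I a b r) \<le> relocated_len c I a b c"
    using ab by (intro relocated_len_min_le) auto
  then consider "relocated_len c I a b l \<le> relocated_len c I a b c"
    | "relocated_len c I a b r \<le> relocated_len c I a b c"
    by linarith
  then show ?thesis
  proof cases
    case 1
    with both show ?thesis by (intro bexI[of _ l]) force+
  next
    case 2
    with both show ?thesis by (intro bexI[of _ r]) force+
  qed
qed

lemma exists_monotone_retraction:
  fixes C X :: "real set" and a b :: "'i \<Rightarrow> real"
  assumes "finite C" "X \<subseteq> C" "X \<noteq> {}" "\<forall>i\<in>I. a i \<in> C \<and> b i \<in> C"
  shows "\<exists>g. mono_on C g \<and> g ` C \<subseteq> X \<and> (\<forall>x\<in>X. g x = x) \<and>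
    (\<Sum>i\<in>I. \<bar>g (b i) - g (a i)\<bar>) \<le> (\<Sum>i\<in>I. \<bar>b i - a i\<bar>)"
  using assms
proof (induction "card (C - X)" arbitrary: C a b rule: less_induct)
  case less
  show ?case
  proof (cases "C \<subseteq> X")
    case True
    then show ?thesis using less.prems(2) by (intro exI[of _ id]) (auto simp: mono_on_def)
  next
    case False
    then obtain c where c: "c \<in> C" "c \<notin> X" by blast
    then have "C - {c} \<noteq> {}" using less.prems(2,3) by blast
    then obtain c' where c': "c' \<in> C - {c}" "\<forall>z\<in>C. (z < c \<longrightarrow> z \<le> c') \<and> (c < z \<longrightarrow> c' \<le> z)"
      and len: "relocated_len c I a b c' \<le> relocated_len c I a b c"
      using exists_relocation_target[OF less.prems(1) c(1) _ less.prems(4)] by blast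
    let ?m = "relocate c c'"
    have m: "mono_on C ?m" "?m ` C \<subseteq> C - {c}" "\<forall>x\<in>X. ?m x = x"
      using mono_on_relocate[OF c'(2)] c c' by (auto simp: relocate_def)
    have "card (C - {c} - X) < card (C - X)"
      using c less.prems(1) by (intro psubset_card_mono) auto
    moreover have "\<forall>i\<in>I. (?m \<circ> a) i \<in> C - {c} \<and> (?m \<circ> b) i \<in> C - {c}"
      using less.prems(4) m(2) by auto
    ultimately obtain g where g: "mono_on (C - {c}) g" "g ` (C - {c}) \<subseteq> X" "\<forall>x\<in>X. g x = x"
      "(\<Sum>i\<in>I. \<bar>g ((?m \<circ> b) i) - g ((?m \<circ> a) i)\<bar>) \<le> (\<Sum>i\<in>I. \<bar>(?m \<circ> b) i - (?m \<circ> a) i\<bar>)"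
      using less.hyps[of "C - {c}"] less.prems(1-3) c(2) by blast
    have "mono_on C (g \<circ> ?m)"
    proof (rule mono_onI)
      fix x y assume "x \<in> C" "y \<in> C" "x \<le> y"
      then show "(g \<circ> ?m) x \<le> (g \<circ> ?m) y"
        using mono_onD[OF m(1)] m(2) by (auto intro!: mono_onD[OF g(1)])
    qed
    moreover have "(\<Sum>i\<in>I. \<bar>(g \<circ> ?m) (b i) - (g \<circ> ?m) (a i)\<bar>) \<le> (\<Sum>i\<in>I. \<bar>b i - a i\<bar>)"
      using g(4) len by (simp add: relocated_len_def)
    ultimately show ?thesis using m g(2,3) by (intro exI[of _ "g \<circ> ?m"]) auto
  qed
qed

section \<open>Snapping a tree onto the grid\<close>

lemma sum_UN_le:
  fixes f :: "'b \<Rightarrow> 'c::ordered_comm_monoid_add"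
  assumes "finite A" "\<And>a. a \<in> A \<Longrightarrow> finite (B a)" "\<And>x. 0 \<le> f x"
  shows "sum f (\<Union>a\<in>A. B a) \<le> (\<Sum>a\<in>A. sum f (B a))"
proof -
  have "(\<Union>a\<in>A. B a) = snd ` Sigma A B" by force
  then have "sum f (\<Union>a\<in>A. B a) \<le> sum (f \<circ> snd) (Sigma A B)"
    using sum_image_le[of "Sigma A B" f snd] assms by auto
  also have "\<dots> = (\<Sum>a\<in>A. sum f (B a))"
    using assms(1,2) by (simp add: sum.Sigma case_prod_unfold)
  finally show ?thesis .
qed

definition snap_edges :: "real set \<Rightarrow> real set \<Rightarrow> (pt \<Rightarrow> pt) \<Rightarrow> (pt \<times> pt) set \<Rightarrow> (pt \<times> pt) set" where
  "snap_edges X Y \<phi> E = (\<Union>(u, v)\<in>E. grid_path X Y (\<phi> u) (\<phi> v))"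

definition snap_verts ::
  "real set \<Rightarrow> real set \<Rightarrow> (pt \<Rightarrow> pt) \<Rightarrow> pt set \<Rightarrow> (pt \<times> pt) set \<Rightarrow> pt set" where
  "snap_verts X Y \<phi> V E = \<phi> ` V \<union> fst ` snap_edges X Y \<phi> E \<union> snd ` snap_edges X Y \<phi> E"

context
  fixes X Y :: "real set" and \<phi> :: "pt \<Rightarrow> pt" and S V :: "pt set" and E :: "(pt \<times> pt) set"
  assumes fin: "finite X" "finite Y" and rst: "is_rst S V E" and grid: "\<phi> ` V \<subseteq> X \<times> Y"
    and aligned: "\<And>u v. (u, v) \<in> E \<Longrightarrow> fst (\<phi> u) = fst (\<phi> v) \<or> snd (\<phi> u) = snd (\<phi> v)"
begin

lemma snap_edge_grid:
  assumes "(u, v) \<in> E"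
  shows "finite X" "finite Y" "\<phi> u \<in> X \<times> Y" "\<phi> v \<in> X \<times> Y"
    "fst (\<phi> u) = fst (\<phi> v) \<or> snd (\<phi> u) = snd (\<phi> v)"
  using fin grid is_rst_edge_vertices[OF rst assms] aligned[OF assms] by auto

lemma snap_edges_subset: "snap_edges X Y \<phi> E \<subseteq> grid_edges X Y"
  unfolding snap_edges_def using grid_path_subset[OF snap_edge_grid] by blast

lemma finite_snap_edges: "finite (snap_edges X Y \<phi> E)"
  unfolding snap_edges_def case_prod_unfold
  by (intro finite_UN_I finite_is_rst_edges[OF rst] finite_grid_path[OF fin])

lemma snap_verts_subset: "snap_verts X Y \<phi> V E \<subseteq> X \<times> Y"
  unfolding snap_verts_def using grid snap_edges_subset grid_edge_props(4,5) by fastforce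

lemma snap_len_le:
  "(\<Sum>e\<in>snap_edges X Y \<phi> E. l1dist (fst e) (snd e)) \<le> (\<Sum>(u, v)\<in>E. l1dist (\<phi> u) (\<phi> v))"
proof -
  have "(\<Sum>e\<in>snap_edges X Y \<phi> E. l1dist (fst e) (snd e))
      \<le> (\<Sum>(u, v)\<in>E. \<Sum>e\<in>grid_path X Y (\<phi> u) (\<phi> v). l1dist (fst e) (snd e))"
    unfolding snap_edges_def case_prod_unfold
    by (rule sum_UN_le) (auto simp: finite_is_rst_edges[OF rst] finite_grid_path[OF fin] l1dist_def)
  also have "\<dots> = (\<Sum>(u, v)\<in>E. l1dist (\<phi> u) (\<phi> v))"
    by (rule sum.cong) (auto simp: grid_path_len[OF snap_edge_grid])
  finally show ?thesis .
qed

lemma snap_edge_links: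
  assumes "(u, v) \<in> E"
  defines "H \<equiv> snap_edges X Y \<phi> E"
  shows "(\<phi> u, \<phi> v) \<in> (H \<union> H\<inverse>)\<^sup>*"
    and "e \<in> grid_path X Y (\<phi> u) (\<phi> v) \<Longrightarrow> (\<phi> u, fst e) \<in> (H \<union> H\<inverse>)\<^sup>* \<and> (\<phi> u, snd e) \<in> (H \<union> H\<inverse>)\<^sup>*"
proof -
  have sub: "grid_path X Y (\<phi> u) (\<phi> v) \<subseteq> H" unfolding H_def snap_edges_def using assms(1) by blast
  note links = grid_path_connects[OF snap_edge_grid[OF assms(1)]]
  show "(\<phi> u, \<phi> v) \<in> (H \<union> H\<inverse>)\<^sup>*" using Un_converse_rtrancl_mono[OF links(1) sub] .
  show "(\<phi> u, fst e) \<in> (H \<union> H\<inverse>)\<^sup>* \<and> (\<phi> u, snd e) \<in> (H \<union> H\<inverse>)\<^sup>*"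
    if "e \<in> grid_path X Y (\<phi> u) (\<phi> v)"
    using links(2)[OF that] Un_converse_rtrancl_mono[OF _ sub] by blast
qed

lemma snap_path:
  assumes "(a, b) \<in> (E \<union> E\<inverse>)\<^sup>*"
  shows "(\<phi> a, \<phi> b) \<in> (snap_edges X Y \<phi> E \<union> (snap_edges X Y \<phi> E)\<inverse>)\<^sup>*"
  using assms
proof (induction rule: rtrancl_induct)
  case (step y z)
  have "(\<phi> y, \<phi> z) \<in> (snap_edges X Y \<phi> E \<union> (snap_edges X Y \<phi> E)\<inverse>)\<^sup>*"
  proof (cases "(y, z) \<in> E")
    case True
    then show ?thesis by (rule snap_edge_links(1))
  next
    case False
    then have "(z, y) \<in> E" using step.hyps(2) by blast
    then show ?thesis by (rule Un_converse_rtrancl_sym[OF snap_edge_links(1)])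
  qed
  with step.IH show ?case by (rule rtrancl_trans)
qed simp

lemma snap_connected:
  defines "H \<equiv> snap_edges X Y \<phi> E"
  shows "\<forall>w\<in>snap_verts X Y \<phi> V E. \<forall>w'\<in>snap_verts X Y \<phi> V E. (w, w') \<in> (H \<union> H\<inverse>)\<^sup>*"
proof -
  obtain u0 where u0: "u0 \<in> V" using rst by (auto simp: is_rst_def)
  have conn: "(u0, v) \<in> (E \<union> E\<inverse>)\<^sup>*" if "v \<in> V" for v
    using rst u0 that by (auto simp: is_rst_def)
  have from_u0: "(\<phi> u0, w) \<in> (H \<union> H\<inverse>)\<^sup>*" if w: "w \<in> snap_verts X Y \<phi> V E" for w
  proof -
    consider (vertex) v where "v \<in> V" "w = \<phi> v"
      | (edge) u v e where "(u, v) \<in> E" "e \<in> grid_path X Y (\<phi> u) (\<phi> v)" "w = fst e \<or> w = snd e"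
      using w unfolding snap_verts_def snap_edges_def by blast
    then show ?thesis
    proof cases
      case vertex
      then show ?thesis using snap_path[OF conn] H_def by simp
    next
      case edge
      have "(\<phi> u0, \<phi> u) \<in> (H \<union> H\<inverse>)\<^sup>*"
        using snap_path[OF conn] is_rst_edge_vertices[OF rst edge(1)] H_def by simp
      moreover have "(\<phi> u, w) \<in> (H \<union> H\<inverse>)\<^sup>*"
        using snap_edge_links(2)[OF edge(1,2)] edge(3) H_def by auto
      ultimately show ?thesis by (rule rtrancl_trans)
    qed
  qed
  show ?thesis using Un_converse_rtrancl_join[OF from_u0 from_u0] by blast
qed

lemma snap_tree_pts:
  assumes "p \<in> tree_pts V E" "\<phi> p \<in> X \<times> Y"
    and box: "\<And>u v. (u, v) \<in> E \<Longrightarrow> in_box p u v \<Longrightarrow> in_box (\<phi> p) (\<phi> u) (\<phi> v)"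
  shows "\<phi> p \<in> snap_verts X Y \<phi> V E"
proof (cases "p \<in> V")
  case True
  then show ?thesis by (simp add: snap_verts_def)
next
  case False
  then obtain u v where uv: "(u, v) \<in> E" "p \<in> closed_segment u v"
    using assms(1) by (auto simp: tree_pts_def)
  then have "in_box (\<phi> p) (\<phi> u) (\<phi> v)" using box closed_segment_in_box by blast
  then have "\<phi> p = \<phi> u \<or> \<phi> p = \<phi> v \<or> (\<exists>e\<in>grid_path X Y (\<phi> u) (\<phi> v). \<phi> p = snd e)"
    using grid_path_covers_box[OF snap_edge_grid[OF uv(1)] assms(2)] by blast
  then show ?thesis
    using is_rst_edge_vertices[OF rst uv(1)] uv(1) unfolding snap_verts_def snap_edges_def by blast
qed

lemma exists_snapped_rst:
  assumes "\<forall>s\<in>S. \<phi> s = s"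
  shows "\<exists>E'\<subseteq>snap_edges X Y \<phi> E. is_rst S (snap_verts X Y \<phi> V E) E' \<and>
    tree_len E' \<le> (\<Sum>(u, v)\<in>E. l1dist (\<phi> u) (\<phi> v))"
proof -
  let ?W = "snap_verts X Y \<phi> V E" and ?H = "snap_edges X Y \<phi> E"
  have "?W \<noteq> {}" using rst by (simp add: snap_verts_def is_rst_def)
  moreover have "finite ?W" using finite_snap_edges rst by (simp add: snap_verts_def is_rst_def)
  moreover have ends: "\<forall>(u, v)\<in>?H. u \<in> ?W \<and> v \<in> ?W"
  proof (clarify)
    fix u v assume "(u, v) \<in> ?H"
    then show "u \<in> ?W \<and> v \<in> ?W"
      using image_eqI[of u fst "(u, v)"] image_eqI[of v snd "(u, v)"] by (simp add: snap_verts_def)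
  qed
  ultimately obtain E' where E': "E' \<subseteq> ?H" "is_tree_on ?W E'"
    using exists_spanning_tree[OF _ _ _ snap_connected] by blast
  have "S \<subseteq> ?W"
  proof
    fix s assume "s \<in> S"
    then have "s \<in> V" "\<phi> s = s" using rst assms by (auto simp: is_rst_def)
    then show "s \<in> ?W" unfolding snap_verts_def by (metis UnI1 image_eqI)
  qed
  moreover have "E' \<subseteq> grid_edges X Y" using E'(1) snap_edges_subset by blast
  ultimately have "is_rst S ?W E'" using is_rst_grid_tree[OF snap_verts_subset] E'(2) by blast
  moreover have "tree_len E' \<le> (\<Sum>e\<in>?H. l1dist (fst e) (snd e))"
    unfolding tree_len_def case_prod_unfold
    by (rule sum_mono2[OF finite_snap_edges E'(1)]) (simp add: l1dist_def)
  then have "tree_len E' \<le> (\<Sum>(u, v)\<in>E. l1dist (\<phi> u) (\<phi> v))"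
    using snap_len_le by (rule order_trans)
  ultimately show ?thesis using E'(1) by blast
qed

end

lemma mono_on_between:
  fixes g :: "real \<Rightarrow> real"
  assumes "mono_on C g" "a \<in> C" "b \<in> C" "s \<in> C" "min a b \<le> s" "s \<le> max a b"
  shows "min (g a) (g b) \<le> g s \<and> g s \<le> max (g a) (g b)"
proof (cases "a \<le> b")
  case True
  then have "g a \<le> g s" "g s \<le> g b"
    using assms mono_onD[OF assms(1)] by (simp_all add: min_def max_def)
  then show ?thesis by (simp add: min_le_iff_disj le_max_iff_disj)
next
  case False
  then have "g b \<le> g s" "g s \<le> g a"
    using assms mono_onD[OF assms(1)] by (simp_all add: min_def max_def)
  then show ?thesis by (simp add: min_le_iff_disj le_max_iff_disj)
qed

lemma in_box_map_prod_mono: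
  assumes "mono_on Cx g" "mono_on Cy h" "fst ` {p, u, v} \<subseteq> Cx" "snd ` {p, u, v} \<subseteq> Cy" "in_box p u v"
  shows "in_box (map_prod g h p) (map_prod g h u) (map_prod g h v)"
proof -
  have "fst p \<in> Cx" "fst u \<in> Cx" "fst v \<in> Cx" "snd p \<in> Cy" "snd u \<in> Cy" "snd v \<in> Cy"
    using assms(3,4) by auto
  then show ?thesis
    using mono_on_between[OF assms(1), of "fst u" "fst v" "fst p"]
      mono_on_between[OF assms(2), of "snd u" "snd v" "snd p"] assms(5)
    by (simp add: in_box_def map_prod_def case_prod_unfold)
qed

lemma map_prod_aligned:
  "fst u = fst v \<or> snd u = snd v \<Longrightarrow>
    fst (map_prod g h u) = fst (map_prod g h v) \<or> snd (map_prod g h u) = snd (map_prod g h v)"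
  by (auto simp: map_prod_def split_beta)

lemma sum_Sigma_pairs:
  fixes f :: "'a \<Rightarrow> 'a \<Rightarrow> 'b::comm_monoid_add"
  assumes "finite J" "\<forall>j\<in>J. finite (E j)"
  shows "(\<Sum>j\<in>J. \<Sum>(u, v)\<in>E j. f u v) = (\<Sum>i\<in>Sigma J E. f (fst (snd i)) (snd (snd i)))"
  using sum.Sigma[OF assms, of "\<lambda>j e. f (fst e) (snd e)"] by (simp add: case_prod_unfold)

lemma exists_snapping_map:
  fixes E :: "'j \<Rightarrow> (pt \<times> pt) set"
  assumes Q: "finite Q" "P \<subseteq> Q" "P \<noteq> {}"
    and E: "finite J" "\<forall>j\<in>J. finite (E j) \<and> (\<forall>(u, v)\<in>E j. u \<in> Q \<and> v \<in> Q)"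
  shows "\<exists>g h. mono_on (fst ` Q) g \<and> mono_on (snd ` Q) h \<and> map_prod g h ` Q \<subseteq> fst ` P \<times> snd ` P \<and>
    (\<forall>p\<in>P. map_prod g h p = p) \<and>
    (\<Sum>j\<in>J. \<Sum>(u, v)\<in>E j. l1dist (map_prod g h u) (map_prod g h v)) \<le> (\<Sum>j\<in>J. tree_len (E j))"
proof -
  define I where "I = Sigma J E"
  have fin: "finite I" using E by (simp add: I_def)
  have "\<forall>i\<in>I. fst (snd i) \<in> Q \<and> snd (snd i) \<in> Q" using E by (auto simp: I_def split_beta)
  then have ends: "\<forall>i\<in>I. fst (fst (snd i)) \<in> fst ` Q \<and> fst (snd (snd i)) \<in> fst ` Q"
    "\<forall>i\<in>I. snd (fst (snd i)) \<in> snd ` Q \<and> snd (snd (snd i)) \<in> snd ` Q" by auto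
  obtain g where g: "mono_on (fst ` Q) g" "g ` fst ` Q \<subseteq> fst ` P" "\<forall>x\<in>fst ` P. g x = x"
    "(\<Sum>i\<in>I. \<bar>g (fst (snd (snd i))) - g (fst (fst (snd i)))\<bar>)
      \<le> (\<Sum>i\<in>I. \<bar>fst (snd (snd i)) - fst (fst (snd i))\<bar>)"
    using exists_monotone_retraction[OF finite_imageI[OF Q(1)] image_mono[OF Q(2)] _ ends(1)] Q(3)
      by blast
  obtain h where h: "mono_on (snd ` Q) h" "h ` snd ` Q \<subseteq> snd ` P" "\<forall>y\<in>snd ` P. h y = y"
    "(\<Sum>i\<in>I. \<bar>h (snd (snd (snd i))) - h (snd (fst (snd i)))\<bar>)
      \<le> (\<Sum>i\<in>I. \<bar>snd (snd (snd i)) - snd (fst (snd i))\<bar>)"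
    using exists_monotone_retraction[OF finite_imageI[OF Q(1)] image_mono[OF Q(2)] _ ends(2)] Q(3)
      by blast
  have l1dist_split: "(\<Sum>i\<in>I. l1dist (f (fst (snd i))) (f (snd (snd i)))) =
      (\<Sum>i\<in>I. \<bar>fst (f (snd (snd i))) - fst (f (fst (snd i)))\<bar>) +
      (\<Sum>i\<in>I. \<bar>snd (f (snd (snd i))) - snd (f (fst (snd i)))\<bar>)" for f :: "pt \<Rightarrow> pt"
    by (simp add: l1dist_def sum.distrib abs_minus_commute)
  have "(\<Sum>j\<in>J. \<Sum>(u, v)\<in>E j. l1dist (map_prod g h u) (map_prod g h v)) =
      (\<Sum>i\<in>I. l1dist (map_prod g h (fst (snd i))) (map_prod g h (snd (snd i))))"
    unfolding I_def using E by (intro sum_Sigma_pairs) auto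
  also have "\<dots> \<le> (\<Sum>i\<in>I. l1dist (id (fst (snd i))) (id (snd (snd i))))"
    unfolding l1dist_split using g(4) h(4) by (simp add: map_prod_def case_prod_unfold)
  also have "\<dots> = (\<Sum>j\<in>J. tree_len (E j))"
    unfolding I_def tree_len_def using E by (simp add: sum_Sigma_pairs)
  finally have len: "(\<Sum>j\<in>J. \<Sum>(u, v)\<in>E j. l1dist (map_prod g h u) (map_prod g h v))
      \<le> (\<Sum>j\<in>J. tree_len (E j))" .
  have "map_prod g h q \<in> fst ` P \<times> snd ` P" if "q \<in> Q" for q
  proof -
    have "g (fst q) \<in> fst ` P" "h (snd q) \<in> snd ` P" using g(2) h(2) that by blast+
    then show ?thesis by (simp add: map_prod_def split_beta)
  qed
  then have "map_prod g h ` Q \<subseteq> fst ` P \<times> snd ` P" by (rule image_subsetI)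
  moreover have "\<forall>p\<in>P. map_prod g h p = p" using g(3) h(3) by (auto simp: map_prod_def split_beta)
  ultimately show ?thesis using g(1) h(1) len by (intro exI[of _ g] exI[of _ h]) simp
qed

lemma snap_component:
  assumes "finite P" "is_rst S V E" "S \<subseteq> P" "V \<subseteq> Q"
    and g: "mono_on (fst ` Q) g" and h: "mono_on (snd ` Q) h"
    and grid: "map_prod g h ` Q \<subseteq> fst ` P \<times> snd ` P" and fixed: "\<forall>p\<in>P. map_prod g h p = p"
  defines "W \<equiv> snap_verts (fst ` P) (snd ` P) (map_prod g h) V E"
  shows "W \<subseteq> fst ` P \<times> snd ` P" "\<forall>p\<in>Q \<inter> tree_pts V E. map_prod g h p \<in> W"
    "\<exists>E'\<subseteq>grid_edges (fst ` P) (snd ` P). is_rst S W E' \<and>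
       tree_len E' \<le> (\<Sum>(u, v)\<in>E. l1dist (map_prod g h u) (map_prod g h v))"
proof -
  have aligned:
    "fst (map_prod g h u) = fst (map_prod g h v) \<or> snd (map_prod g h u) = snd (map_prod g h v)"
    if "(u, v) \<in> E" for u v
    by (rule map_prod_aligned[OF is_rst_edge_aligned[OF assms(2) that]])
  have ctx: "finite (fst ` P)" "finite (snd ` P)" "is_rst S V E"
    "map_prod g h ` V \<subseteq> fst ` P \<times> snd ` P"
    using assms(1,2,4) grid by auto
  note ctx = ctx aligned
  show "W \<subseteq> fst ` P \<times> snd ` P" unfolding W_def using snap_verts_subset[OF ctx] .
  show "\<forall>p\<in>Q \<inter> tree_pts V E. map_prod g h p \<in> W"
  proof
    fix p assume p: "p \<in> Q \<inter> tree_pts V E"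
    have "in_box (map_prod g h p) (map_prod g h u) (map_prod g h v)"
      if "(u, v) \<in> E" "in_box p u v" for u v
      using in_box_map_prod_mono[OF g h _ _ that(2)] is_rst_edge_vertices[OF assms(2) that(1)]
        p assms(4)
      by blast
    then show "map_prod g h p \<in> W" unfolding W_def using snap_tree_pts[OF ctx] p grid by blast
  qed
  have "\<forall>s\<in>S. map_prod g h s = s" using assms(3) fixed by blast
  then show "\<exists>E'\<subseteq>grid_edges (fst ` P) (snd ` P). is_rst S W E' \<and>
      tree_len E' \<le> (\<Sum>(u, v)\<in>E. l1dist (map_prod g h u) (map_prod g h v))"
    unfolding W_def using exists_snapped_rst[OF ctx] snap_edges_subset[OF ctx] by blast
qed

section \<open>Snapping two-level trees\<close>

definition two_level_part ::
  "nat \<Rightarrow> pt set \<Rightarrow> (pt \<times> pt) set \<Rightarrow> (nat \<Rightarrow> pt set \<times> (pt \<times> pt) set) \<Rightarrow> nat \<Rightarrow> pt set \<times> (pt \<times> pt) set"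
  where "two_level_part k Vt Et T j = (if j < k then T j else (Vt, Et))"

definition two_level_terms :: "nat \<Rightarrow> (nat \<Rightarrow> pt set) \<Rightarrow> nat \<Rightarrow> pt set" where
  "two_level_terms k Ps j = (if j < k then Ps j else {})"

lemma two_level_part_rst:
  assumes "two_level_rst k Ps Vt Et T" "j \<le> k"
  shows "is_rst (two_level_terms k Ps j)
    (fst (two_level_part k Vt Et T j)) (snd (two_level_part k Vt Et T j))"
  using assms unfolding two_level_rst_def two_level_part_def two_level_terms_def
    by (cases "j < k") auto

lemma two_level_len_parts:
  "two_level_len k Et T = (\<Sum>j\<le>k. tree_len (snd (two_level_part k Vt Et T j)))"
  by (simp add: two_level_len_def two_level_part_def lessThan_Suc_atMost[symmetric])

definition grid_two_level ::
  "real set \<Rightarrow> real set \<Rightarrow> nat \<Rightarrow> (nat \<Rightarrow> pt set) \<Rightarrow>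
    (pt set \<times> (pt \<times> pt) set \<times> (nat \<Rightarrow> pt set \<times> (pt \<times> pt) set)) set" where
  "grid_two_level X Y k Ps = {(Vt, Et, T). Vt \<subseteq> X \<times> Y \<and> Et \<subseteq> grid_edges X Y \<and>
     T \<in> {..<k} \<rightarrow>\<^sub>E Pow (X \<times> Y) \<times> Pow (grid_edges X Y) \<and> two_level_rst k Ps Vt Et T}"

lemma grid_two_level_of_parts:
  assumes parts: "\<forall>j\<le>k. fst (C j) \<subseteq> X \<times> Y \<and> snd (C j) \<subseteq> grid_edges X Y \<and>
      is_rst (two_level_terms k Ps j) (fst (C j)) (snd (C j))"
    and meet: "\<forall>i<k. tree_pts (fst (C k)) (snd (C k)) \<inter> tree_pts (fst (C i)) (snd (C i)) \<noteq> {}"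
  shows "(fst (C k), snd (C k), restrict C {..<k}) \<in> grid_two_level X Y k Ps"
    "two_level_len k (snd (C k)) (restrict C {..<k}) = (\<Sum>j\<le>k. tree_len (snd (C j)))"
proof -
  have "is_rst {} (fst (C k)) (snd (C k))" using parts by (auto simp: two_level_terms_def)
  moreover have "is_rst (Ps i) (fst (C i)) (snd (C i))" if "i < k" for i
    using parts[rule_format, of i] that by (simp add: two_level_terms_def)
  ultimately have "two_level_rst k Ps (fst (C k)) (snd (C k)) (restrict C {..<k})"
    using meet by (simp add: two_level_rst_def)
  moreover have "restrict C {..<k} \<in> {..<k} \<rightarrow>\<^sub>E Pow (X \<times> Y) \<times> Pow (grid_edges X Y)"
    using parts by (simp add: mem_Times_iff)
  ultimately show "(fst (C k), snd (C k), restrict C {..<k}) \<in> grid_two_level X Y k Ps"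
    using parts by (simp add: grid_two_level_def)
  show "two_level_len k (snd (C k)) (restrict C {..<k}) = (\<Sum>j\<le>k. tree_len (snd (C j)))"
    unfolding two_level_len_parts[of k "snd (C k)" "restrict C {..<k}" "fst (C k)"]
    by (rule sum.cong) (auto simp: two_level_part_def)
qed

lemma finite_grid_two_level: "finite X \<Longrightarrow> finite Y \<Longrightarrow> finite (grid_two_level X Y k Ps)"
  by (rule finite_subset[of _ "Pow (X \<times> Y) \<times> Pow (grid_edges X Y) \<times>
      ({..<k} \<rightarrow>\<^sub>E Pow (X \<times> Y) \<times> Pow (grid_edges X Y))"])
    (auto simp: grid_two_level_def finite_grid_edges intro!: finite_cartesian_product finite_PiE)

lemma grid_two_level_nonempty:
  assumes "finite X" "finite Y" "X \<noteq> {}" "Y \<noteq> {}" "\<forall>i<k. Ps i \<subseteq> X \<times> Y"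
  shows "grid_two_level X Y k Ps \<noteq> {}"
proof -
  have "\<forall>(u, v)\<in>grid_edges X Y. u \<in> X \<times> Y \<and> v \<in> X \<times> Y" using grid_edge_props(4,5) by blast
  then obtain E where E: "E \<subseteq> grid_edges X Y" "is_tree_on (X \<times> Y) E"
    using exists_spanning_tree[OF _ _ _ grid_connected] assms(1-4) by blast
  have "is_rst (two_level_terms k Ps j) (X \<times> Y) E" for j
    using is_rst_grid_tree[OF subset_refl _ E] assms(5) by (simp add: two_level_terms_def)
  moreover have "tree_pts (X \<times> Y) E \<noteq> {}" using assms(3,4) by (simp add: tree_pts_def)
  ultimately have "(X \<times> Y, E, restrict (\<lambda>_. (X \<times> Y, E)) {..<k}) \<in> grid_two_level X Y k Ps"
    using grid_two_level_of_parts(1)[of k "\<lambda>_. (X \<times> Y, E)"] E(1) by simp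
  then show ?thesis by blast
qed

lemma grid_two_level_hanan:
  assumes "(Vt, Et, T) \<in> grid_two_level (fst ` P) (snd ` P) k Ps"
  shows "tree_pts Vt Et \<subseteq> hanan_grid P" "\<forall>i<k. tree_pts (fst (T i)) (snd (T i)) \<subseteq> hanan_grid P"
proof -
  show "tree_pts Vt Et \<subseteq> hanan_grid P"
    using assms by (intro grid_tree_pts_subset_hanan) (auto simp: grid_two_level_def)
  show "\<forall>i<k. tree_pts (fst (T i)) (snd (T i)) \<subseteq> hanan_grid P"
  proof (intro allI impI)
    fix i assume "i < k"
    then have "T i \<in> Pow (fst ` P \<times> snd ` P) \<times> Pow (grid_edges (fst ` P) (snd ` P))"
      using assms by (auto simp: grid_two_level_def)
    then show "tree_pts (fst (T i)) (snd (T i)) \<subseteq> hanan_grid P"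
      by (intro grid_tree_pts_subset_hanan) (auto simp: mem_Times_iff)
  qed
qed

lemma exists_two_level_snapping_map:
  assumes P: "finite P" "P \<noteq> {}" "\<forall>i<k. Ps i \<subseteq> P" and tl: "two_level_rst k Ps Vt Et T"
  obtains Q g h where "\<forall>j\<le>k. fst (two_level_part k Vt Et T j) \<subseteq> Q"
    "\<forall>i<k. \<exists>p\<in>Q. p \<in> tree_pts Vt Et \<inter> tree_pts (fst (T i)) (snd (T i))"
    "mono_on (fst ` Q) g" "mono_on (snd ` Q) h"
    "map_prod g h ` Q \<subseteq> fst ` P \<times> snd ` P" "\<forall>p\<in>P. map_prod g h p = p"
    "(\<Sum>j\<le>k. \<Sum>(u, v)\<in>snd (two_level_part k Vt Et T j). l1dist (map_prod g h u) (map_prod g h v))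
      \<le> two_level_len k Et T"
proof -
  let ?C = "two_level_part k Vt Et T"
  have rst: "is_rst (two_level_terms k Ps j) (fst (?C j)) (snd (?C j))" if "j \<le> k" for j
    using two_level_part_rst[OF tl that] .
  have "\<forall>i. \<exists>p. i < k \<longrightarrow> p \<in> tree_pts Vt Et \<inter> tree_pts (fst (T i)) (snd (T i))"
    using tl unfolding two_level_rst_def by blast
  then obtain pp where pp: "\<forall>i<k. pp i \<in> tree_pts Vt Et \<inter> tree_pts (fst (T i)) (snd (T i))"
    by (metis choice)
  define Q where "Q = P \<union> (\<Union>j\<le>k. fst (?C j)) \<union> pp ` {..<k}"
  have Q: "finite Q" "P \<subseteq> Q" using P(1) rst by (auto simp: Q_def is_rst_def)
  have CQ: "\<forall>j\<le>k. fst (?C j) \<subseteq> Q" unfolding Q_def by blast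
  have "\<forall>j\<in>{..k}. finite (snd (?C j)) \<and> (\<forall>(u, v)\<in>snd (?C j). u \<in> Q \<and> v \<in> Q)"
  proof
    fix j assume "j \<in> {..k}"
    then have "j \<le> k" by simp
    then show "finite (snd (?C j)) \<and> (\<forall>(u, v)\<in>snd (?C j). u \<in> Q \<and> v \<in> Q)"
      using finite_is_rst_edges[OF rst] is_rst_edge_vertices[OF rst] CQ by blast
  qed
  from exists_snapping_map[OF Q P(2) finite_atMost this]
  obtain g h where gh: "mono_on (fst ` Q) g" "mono_on (snd ` Q) h"
    "map_prod g h ` Q \<subseteq> fst ` P \<times> snd ` P" "\<forall>p\<in>P. map_prod g h p = p"
    and "(\<Sum>j\<le>k. \<Sum>(u, v)\<in>snd (?C j). l1dist (map_prod g h u) (map_prod g h v))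
      \<le> (\<Sum>j\<le>k. tree_len (snd (?C j)))"
    by blast
  then have "(\<Sum>j\<le>k. \<Sum>(u, v)\<in>snd (?C j). l1dist (map_prod g h u) (map_prod g h v))
      \<le> two_level_len k Et T"
    by (simp only: two_level_len_parts[of k Et T Vt])
  moreover have "\<forall>i<k. \<exists>p\<in>Q. p \<in> tree_pts Vt Et \<inter> tree_pts (fst (T i)) (snd (T i))"
    using pp unfolding Q_def by blast
  ultimately show ?thesis using that[OF CQ _ gh] by blast
qed

lemma two_level_rst_snap_to_grid:
  assumes P: "finite P" "P \<noteq> {}" "\<forall>i<k. Ps i \<subseteq> P" and tl: "two_level_rst k Ps Vt Et T"
  shows "\<exists>t\<in>grid_two_level (fst ` P) (snd ` P) k Ps.
    two_level_len k (fst (snd t)) (snd (snd t)) \<le> two_level_len k Et T"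
proof -
  let ?C = "two_level_part k Vt Et T" and ?S = "two_level_terms k Ps"
  obtain Q g h where CQ: "\<forall>j\<le>k. fst (?C j) \<subseteq> Q"
    and meetQ: "\<forall>i<k. \<exists>p\<in>Q. p \<in> tree_pts Vt Et \<inter> tree_pts (fst (T i)) (snd (T i))"
    and gh: "mono_on (fst ` Q) g" "mono_on (snd ` Q) h"
      "map_prod g h ` Q \<subseteq> fst ` P \<times> snd ` P" "\<forall>p\<in>P. map_prod g h p = p"
    and len: "(\<Sum>j\<le>k. \<Sum>(u, v)\<in>snd (?C j). l1dist (map_prod g h u) (map_prod g h v))
      \<le> two_level_len k Et T"
    by (rule exists_two_level_snapping_map[OF P tl])
  define W where
    "W j = snap_verts (fst ` P) (snd ` P) (map_prod g h) (fst (?C j)) (snd (?C j))" for j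
  have SP: "?S j \<subseteq> P" for j using P(3) by (simp add: two_level_terms_def)
  have CQ': "fst (?C j) \<subseteq> Q" if "j \<le> k" for j using CQ that by blast
  note snap = snap_component[OF P(1) two_level_part_rst[OF tl] SP CQ' gh, folded W_def]
  have "\<forall>j. \<exists>E'. j \<le> k \<longrightarrow> E' \<subseteq> grid_edges (fst ` P) (snd ` P) \<and> is_rst (?S j) (W j) E' \<and>
      tree_len E' \<le> (\<Sum>(u, v)\<in>snd (?C j). l1dist (map_prod g h u) (map_prod g h v))"
    using snap(3) by blast
  then obtain EE where EE:
    "\<forall>j\<le>k. EE j \<subseteq> grid_edges (fst ` P) (snd ` P) \<and> is_rst (?S j) (W j) (EE j) \<and>
      tree_len (EE j) \<le> (\<Sum>(u, v)\<in>snd (?C j). l1dist (map_prod g h u) (map_prod g h v))"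
    by (metis choice)
  define C' where "C' j = (W j, EE j)" for j
  have meet: "\<forall>i<k. tree_pts (fst (C' k)) (snd (C' k)) \<inter> tree_pts (fst (C' i)) (snd (C' i)) \<noteq> {}"
  proof (intro allI impI)
    fix i assume "i < k"
    then obtain p where "p \<in> Q"
      "p \<in> tree_pts (fst (?C k)) (snd (?C k))" "p \<in> tree_pts (fst (?C i)) (snd (?C i))"
      using meetQ by (auto simp: two_level_part_def)
    then have "map_prod g h p \<in> W k \<inter> W i" using snap(2) CQ \<open>i < k\<close> by simp
    then show "tree_pts (fst (C' k)) (snd (C' k)) \<inter> tree_pts (fst (C' i)) (snd (C' i)) \<noteq> {}"
      by (auto simp: C'_def tree_pts_def)
  qed
  have "\<forall>j\<le>k. fst (C' j) \<subseteq> fst ` P \<times> snd ` P \<and> snd (C' j) \<subseteq> grid_edges (fst ` P) (snd ` P) \<and>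
      is_rst (?S j) (fst (C' j)) (snd (C' j))"
    using snap(1) EE CQ by (simp add: C'_def)
  note grid = grid_two_level_of_parts[OF this meet]
  have "(\<Sum>j\<le>k. tree_len (snd (C' j)))
      \<le> (\<Sum>j\<le>k. \<Sum>(u, v)\<in>snd (?C j). l1dist (map_prod g h u) (map_prod g h v))"
    by (rule sum_mono) (use EE in \<open>simp add: C'_def\<close>)
  also note len
  finally show ?thesis
    using grid by (intro bexI[of _ "(fst (C' k), snd (C' k), restrict C' {..<k})"]) simp_all
qed

lemma ex_min_if_finite_dominating:
  fixes f :: "'a \<Rightarrow> 'b::linorder"
  assumes "finite C" "C \<noteq> {}" "\<And>y. F y \<Longrightarrow> \<exists>x\<in>C. f x \<le> f y"
  shows "\<exists>x\<in>C. \<forall>y. F y \<longrightarrow> f x \<le> f y"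
proof -
  obtain x where "x \<in> C" and min: "\<forall>x'\<in>C. f x \<le> f x'"
    using ex_is_arg_min_if_finite[OF assms(1,2), of f] by (auto simp: is_arg_min_def not_less)
  show ?thesis
  proof (intro bexI allI impI)
    fix y assume "F y"
    then obtain x' where "x' \<in> C" "f x' \<le> f y" using assms(3) by blast
    then show "f x \<le> f y" using min by (blast intro: order_trans)
  qed fact
qed

theorem corollary1:
  fixes P :: "pt set" and k :: nat and Ps :: "nat \<Rightarrow> pt set"
  assumes "finite P"
    and "k \<ge> 1"
    and "\<forall>i<k. Ps i \<noteq> {}"
    and "\<forall>i<k. \<forall>j<k. i \<noteq> j \<longrightarrow> Ps i \<inter> Ps j = {}"
    and "(\<Union>i<k. Ps i) = P"
  shows "\<exists>Vt Et T. two_level_rst k Ps Vt Et T \<and>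
           tree_pts Vt Et \<subseteq> hanan_grid P \<and>
           (\<forall>i<k. tree_pts (fst (T i)) (snd (T i)) \<subseteq> hanan_grid P) \<and>
           (\<forall>Vt' Et' T'. two_level_rst k Ps Vt' Et' T' \<longrightarrow>
              two_level_len k Et T \<le> two_level_len k Et' T')"
proof -
  \<comment> \<open>The sets \<open>Ps i\<close> need not be disjoint for this argument.\<close>
  have PsP: "\<forall>i<k. Ps i \<subseteq> P" using assms(5) by blast
  have "Ps 0 \<noteq> {}" "Ps 0 \<subseteq> P" using assms(2,3) PsP by auto
  then have "P \<noteq> {}" by blast
  let ?G = "grid_two_level (fst ` P) (snd ` P) k Ps"
  let ?F = "\<lambda>t. two_level_rst k Ps (fst t) (fst (snd t)) (snd (snd t))"
  let ?len = "\<lambda>t. two_level_len k (fst (snd t)) (snd (snd t))"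
  have "finite ?G" using assms(1) by (simp add: finite_grid_two_level)
  moreover have "?G \<noteq> {}"
  proof (rule grid_two_level_nonempty)
    show "\<forall>i<k. Ps i \<subseteq> fst ` P \<times> snd ` P" using PsP subset_fst_snd[of P] by blast
  qed (use \<open>P \<noteq> {}\<close> assms(1) in auto)
  moreover have "\<exists>t\<in>?G. ?len t \<le> ?len t'" if "?F t'" for t'
    using two_level_rst_snap_to_grid[OF assms(1) \<open>P \<noteq> {}\<close> PsP that] .
  ultimately obtain t where t: "t \<in> ?G" and min: "\<forall>t'. ?F t' \<longrightarrow> ?len t \<le> ?len t'"
    using ex_min_if_finite_dominating[of ?G ?F ?len] by blast
  obtain Vt Et T where t_def: "t = (Vt, Et, T)" by (rule prod_cases3)
  have "two_level_rst k Ps Vt Et T" using t t_def by (simp add: grid_two_level_def)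
  moreover have "two_level_len k Et T \<le> two_level_len k Et' T'"
    if "two_level_rst k Ps Vt' Et' T'" for Vt' Et' T'
    using min[rule_format, of "(Vt', Et', T')"] that t_def by simp
  ultimately show ?thesis
    using grid_two_level_hanan[OF t[unfolded t_def]]
    by (intro exI[of _ Vt] exI[of _ Et] exI[of _ T]) simp
qed

end
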